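(* Fix a prime $p$. Let $E/\mathbb{Q}$ be an elliptic curve with a fixed Weierstrass model (integral coefficients) and let $P\in E(\mathbb{Q})$, $P\neq O$. Write $P=(a/d^2,b/d^3)$ and, for $n\ge1$, $u_n=\frac{d^{n^2}f_n(P)}{d_n}$, where $f_n$ is the $n$-th division polynomial and $d_n=d(nP)$. Then $$P\in E^0(\mathbb{Q}_p)\iff u_2\in\mathbb{Z}_p^\times.$$ In particular, $C_E(P)=\min\{n: |u_2(nP)|=1\}$.
   Context: A point $R\ne O$ of $E(\mathbb{Q})$ is written uniquely as $R=(a/d^2,b/d^3)$ with $a,b,d\in\mathbb{Z}$, $d>0$, $\gcd(a,d)=\gcd(b,d)=1$, and $d(R)=d$. $E^0(\mathbb{Q}_p)$ is the set of points of $E(\mathbb{Q}_p)$ with non-singular reduction mod $p$; $E^0(\mathbb{Q})$ is the set of points of $E(\mathbb{Q})$ with non-singular reduction at every prime; $C_E(P)=\min\{n\ge1: nP\in E^0(\mathbb{Q})\}$. The division polynomial $f_n$ is the one relative to the invariant differential, with $f_2=2y+a_1x+a_3$; $u_2(nP)$ denotes the quantity $u_2$ computed for the point $nP$, and $|\cdot|$ is the ordinary absolute value on $\mathbb{Q}$. *)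

theory Defs
  imports Complex_Main "HOL-Computational_Algebra.Primes"
begin

text \<open>A Weierstrass model with integral coefficients
  y^2 + a1 x y + a3 y = x^3 + a2 x^2 + a4 x + a6.\<close>
record wcurve =
  wa1 :: int
  wa2 :: int
  wa3 :: int
  wa4 :: int
  wa6 :: int

definition disc :: "wcurve \<Rightarrow> int" where
  "disc E = (let a1 = wa1 E; a2 = wa2 E; a3 = wa3 E; a4 = wa4 E; a6 = wa6 E;
      b2 = a1^2 + 4*a2; b4 = 2*a4 + a1*a3; b6 = a3^2 + 4*a6;
      b8 = a1^2*a6 + 4*a2*a6 - a1*a3*a4 + a2*a3^2 - a4^2
    in (- (b2^2*b8)) - 8*b4^3 - 27*b6^2 + 9*b2*b4*b6)"

definition elliptic :: "wcurve \<Rightarrow> bool" where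
  "elliptic E \<longleftrightarrow> disc E \<noteq> 0"

text \<open>Rational points: None is the point at infinity O.\<close>
type_synonym qpoint = "(rat \<times> rat) option"

definition on_curve :: "wcurve \<Rightarrow> qpoint \<Rightarrow> bool" where
  "on_curve E P = (case P of None \<Rightarrow> True | Some (x, y) \<Rightarrow>
     y^2 + of_int (wa1 E)*x*y + of_int (wa3 E)*y
       = x^3 + of_int (wa2 E)*x^2 + of_int (wa4 E)*x + of_int (wa6 E))"

definition padd :: "wcurve \<Rightarrow> qpoint \<Rightarrow> qpoint \<Rightarrow> qpoint" where
  "padd E P Q = (case P of None \<Rightarrow> Q | Some (x1, y1) \<Rightarrow>
     (case Q of None \<Rightarrow> P | Some (x2, y2) \<Rightarrow>
       (let a1 = of_int (wa1 E); a2 = of_int (wa2 E); a3 = of_int (wa3 E);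
            a4 = of_int (wa4 E) in
        if x1 = x2 \<and> y1 + y2 + a1*x2 + a3 = 0 then None
        else
          let l = (if x1 = x2 then (3*x1^2 + 2*a2*x1 + a4 - a1*y1) / (2*y1 + a1*x1 + a3)
                   else (y2 - y1) / (x2 - x1));
              nu = y1 - l*x1;
              x3 = l^2 + a1*l - a2 - x1 - x2;
              y3 = - (l + a1)*x3 - nu - a3
          in Some (x3, y3))))"

fun pmult :: "wcurve \<Rightarrow> nat \<Rightarrow> qpoint \<Rightarrow> qpoint" where
  "pmult E 0 P = None"
| "pmult E (Suc n) P = padd E P (pmult E n P)"

definition infinite_order :: "wcurve \<Rightarrow> qpoint \<Rightarrow> bool" where
  "infinite_order E P \<longleftrightarrow> (\<forall>n::nat. n \<ge> 1 \<longrightarrow> pmult E n P \<noteq> None)"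

definition dnum :: "qpoint \<Rightarrow> int" where
  "dnum R = (THE d. \<exists>a b. d > 0 \<and> gcd a d = 1 \<and> gcd b d = 1 \<and>
                     R = Some (of_int a / of_int d^2, of_int b / of_int d^3))"

definition f2 :: "wcurve \<Rightarrow> qpoint \<Rightarrow> rat" where
  "f2 E R = (case R of None \<Rightarrow> 0 | Some (x, y) \<Rightarrow>
     2*y + of_int (wa1 E)*x + of_int (wa3 E))"

definition u2 :: "wcurve \<Rightarrow> qpoint \<Rightarrow> rat" where
  "u2 E R = of_int (dnum R) ^ 4 * f2 E R / of_int (dnum (pmult E 2 R))"

definition in_pmax :: "int \<Rightarrow> rat \<Rightarrow> bool" where
  "in_pmax p v \<longleftrightarrow> p dvd fst (quotient_of v) \<and> \<not> p dvd snd (quotient_of v)"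

definition padic_unit :: "int \<Rightarrow> rat \<Rightarrow> bool" where
  "padic_unit p v \<longleftrightarrow> \<not> p dvd fst (quotient_of v) \<and> \<not> p dvd snd (quotient_of v)"

text \<open>R \<in> E^0(Q_p) for a rational point R: the reduction mod p of R on the
  fixed model is a non-singular point.  If p | d(R), R reduces to O (non-singular).
  Otherwise R is p-integral, and its reduction is singular iff both partial
  derivatives of the Weierstrass equation vanish mod p.\<close>
definition nonsing_red :: "wcurve \<Rightarrow> int \<Rightarrow> qpoint \<Rightarrow> bool" where
  "nonsing_red E p R = (case R of None \<Rightarrow> True | Some (x, y) \<Rightarrow>
     p dvd dnum R \<or>
     \<not> (in_pmax p (2*y + of_int (wa1 E)*x + of_int (wa3 E)) \<and>
        in_pmax p (of_int (wa1 E)*y - 3*x^2 - 2*of_int (wa2 E)*x - of_int (wa4 E))))"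

definition in_E0 :: "wcurve \<Rightarrow> qpoint \<Rightarrow> bool" where
  "in_E0 E R \<longleftrightarrow> (\<forall>q::int. prime q \<longrightarrow> nonsing_red E q R)"

definition CE :: "wcurve \<Rightarrow> qpoint \<Rightarrow> nat" where
  "CE E P = (LEAST n. n \<ge> 1 \<and> in_E0 E (pmult E n P))"

end

theory Submission
  imports Defs "HOL-Number_Theory.Cong"
begin

(* Write Q = (a/d^2, b/d^3) in lowest terms and clear denominators: D = d^3 f_2(Q) and
   N = d^4 (3x^2 + 2 a2 x + a4 - a1 y) are integers, x(2Q) = M / (d D)^2 with
   M = N^2 + a1 N d D - a2 d^2 D^2 - 2 a D^2, and u_2(Q) = d D / d(2Q).  Comparing
   M e^2 = a' (d D)^2 for x(2Q) = a'/e^2 in lowest terms gives v_p(e) <= v_p(d D), with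
   equality when p does not divide M.  If p | d then M = a^4 (mod d) is prime to p.  If p does
   not divide d, Q is singular mod p iff p | D and p | N; then p^2 | M and cancelling p^2 gives
   v_p(e) < v_p(d D); otherwise p does not divide D, or it divides D but not N and hence not M.  For C_E(P), a rational number
   is a unit at every prime iff it is +-1; the criterion applies to every nP because P has
   infinite order and no nP is 2-torsion, which uses the cancellation law P + (-(P + S)) = -S
   of the chord-tangent construction. *)

definition weq :: "wcurve \<Rightarrow> rat \<Rightarrow> rat \<Rightarrow> rat" where
  "weq E x y = y^2 + of_int (wa1 E)*x*y + of_int (wa3 E)*y
     - (x^3 + of_int (wa2 E)*x^2 + of_int (wa4 E)*x + of_int (wa6 E))"

definition tangent_num :: "wcurve \<Rightarrow> rat \<Rightarrow> rat \<Rightarrow> rat" where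
  "tangent_num E x y = 3*x^2 + 2*of_int (wa2 E)*x + of_int (wa4 E) - of_int (wa1 E)*y"

definition tangent_den :: "wcurve \<Rightarrow> rat \<Rightarrow> rat \<Rightarrow> rat" where
  "tangent_den E x y = 2*y + of_int (wa1 E)*x + of_int (wa3 E)"

definition pneg :: "wcurve \<Rightarrow> qpoint \<Rightarrow> qpoint" where
  "pneg E P = (case P of None \<Rightarrow> None | Some (x, y) \<Rightarrow>
     Some (x, - y - of_int (wa1 E)*x - of_int (wa3 E)))"

lemma pneg_None [simp]: "pneg E None = None"
  by (simp add: pneg_def)

lemma pneg_Some [simp]: "pneg E (Some (x, y)) = Some (x, - y - of_int (wa1 E)*x - of_int (wa3 E))"
  by (simp add: pneg_def)

lemma pneg_pneg [simp]: "pneg E (pneg E P) = P"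
  by (cases P) auto

lemma singular_point_disc:
  fixes x y a1 a2 a3 a4 a6 :: "'a :: field_char_0"
  assumes "y^2 + a1*x*y + a3*y - (x^3 + a2*x^2 + a4*x + a6) = 0"
    and "2*y + a1*x + a3 = 0" and "3*x^2 + 2*a2*x + a4 - a1*y = 0"
  shows "(let b2 = a1^2 + 4*a2; b4 = 2*a4 + a1*a3; b6 = a3^2 + 4*a6;
      b8 = a1^2*a6 + 4*a2*a6 - a1*a3*a4 + a2*a3^2 - a4^2
    in (- (b2^2*b8)) - 8*b4^3 - 27*b6^2 + 9*b2*b4*b6) = 0"
  using assms unfolding Let_def by algebra

lemma on_curve_Some: "on_curve E (Some (x, y)) \<longleftrightarrow> weq E x y = 0"
  by (simp add: on_curve_def weq_def)

lemma weq_pneg: "weq E x (- y - of_int (wa1 E)*x - of_int (wa3 E)) = weq E x y"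
  unfolding weq_def by algebra

lemma on_curve_pneg: "on_curve E P \<Longrightarrow> on_curve E (pneg E P)"
  by (cases P) (auto simp: on_curve_Some weq_pneg)

lemma f2_Some [simp]: "f2 E (Some (x, y)) = tangent_den E x y"
  by (simp add: f2_def tangent_den_def)

lemma padd_None_left [simp]: "padd E None Q = Q"
  by (simp add: padd_def)

lemma padd_None_right [simp]: "padd E P None = P"
  by (cases P) (auto simp: padd_def)

lemma padd_vertical:
  assumes "x2 = x1" and "y1 + y2 + of_int (wa1 E)*x1 + of_int (wa3 E) = 0"
  shows "padd E (Some (x1, y1)) (Some (x2, y2)) = None"
  using assms by (simp add: padd_def)

lemma padd_pneg: "padd E P (pneg E P) = None"
  by (cases P) (auto intro!: padd_vertical)

lemma disc_eq_0_if_singular: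
  assumes "weq E x y = 0" and "tangent_den E x y = 0" and "tangent_num E x y = 0"
  shows "disc E = 0"
proof -
  have "(of_int (disc E) :: rat) = 0"
    using singular_point_disc[of y "of_int (wa1 E)" x "of_int (wa3 E)" "of_int (wa2 E)"
        "of_int (wa4 E)" "of_int (wa6 E)"] assms
    unfolding disc_def weq_def tangent_den_def tangent_num_def Let_def by simp
  then show ?thesis by simp
qed

text \<open>Along the line y = l X + nu the Weierstrass equation becomes a cubic in X with
  leading coefficient -1 and roots summing to l^2 + a1 l - a2; its derivative at X is
  l tangent_den - tangent_num.\<close>

lemma chord_third_root:
  assumes "x1 \<noteq> x2" and "weq E x1 (l*x1 + nu) = 0" and "weq E x2 (l*x2 + nu) = 0"
    and x3: "x3 = l^2 + of_int (wa1 E)*l - of_int (wa2 E) - x1 - x2"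
  shows "weq E x3 (l*x3 + nu) = 0"
    and "l * tangent_den E x1 (l*x1 + nu) - tangent_num E x1 (l*x1 + nu) = (x2 - x1)*(x1 - x3)"
proof -
  define c1 where "c1 = 2*l*nu + of_int (wa1 E)*nu + of_int (wa3 E)*l - of_int (wa4 E)
    + (x1*x2 + x1*x3 + x2*x3)"
  define c0 where "c0 = nu^2 + of_int (wa3 E)*nu - of_int (wa6 E) - x1*x2*x3"
  have cubic: "weq E X (l*X + nu) + (X - x1)*(X - x2)*(X - x3) = c1*X + c0" for X
    unfolding c1_def c0_def x3 weq_def by algebra
  have at_x1: "c1*x1 + c0 = 0" and at_x2: "c1*x2 + c0 = 0"
    using cubic[of x1] cubic[of x2] assms(2,3) by simp_all
  have "c1*(x1 - x2) = (c1*x1 + c0) - (c1*x2 + c0)"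
    by (simp add: algebra_simps)
  then have "c1*(x1 - x2) = 0"
    using at_x1 at_x2 by simp
  then have c1: "c1 = 0" and c0: "c0 = 0"
    using \<open>x1 \<noteq> x2\<close> at_x1 by simp_all
  show "weq E x3 (l*x3 + nu) = 0"
    using cubic[of x3] c1 c0 by simp
  have "l * tangent_den E x1 (l*x1 + nu) - tangent_num E x1 (l*x1 + nu) = c1 + (x2 - x1)*(x1 - x3)"
    unfolding c1_def x3 tangent_den_def tangent_num_def by algebra
  then show "l * tangent_den E x1 (l*x1 + nu) - tangent_num E x1 (l*x1 + nu) = (x2 - x1)*(x1 - x3)"
    using c1 by simp
qed

lemma tangent_third_root:
  assumes "weq E x1 (l*x1 + nu) = 0"
    and "l * tangent_den E x1 (l*x1 + nu) = tangent_num E x1 (l*x1 + nu)"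
    and "x3 = l^2 + of_int (wa1 E)*l - of_int (wa2 E) - x1 - x1"
  shows "weq E x3 (l*x3 + nu) = 0"
  using assms unfolding weq_def tangent_den_def tangent_num_def by algebra

definition third_x :: "wcurve \<Rightarrow> rat \<Rightarrow> rat \<Rightarrow> rat \<Rightarrow> rat" where
  "third_x E l x1 x2 = l^2 + of_int (wa1 E)*l - of_int (wa2 E) - x1 - x2"

text \<open>The line y = l X + nu that padd uses for two affine points: their secant, or
  their (non-vertical) tangent when they coincide.\<close>
definition addition_line :: "wcurve \<Rightarrow> rat \<Rightarrow> rat \<Rightarrow> rat \<times> rat \<Rightarrow> rat \<times> rat \<Rightarrow> bool" where
  "addition_line E l nu P1 P2 \<longleftrightarrow> (case (P1, P2) of ((x1, y1), (x2, y2)) \<Rightarrow>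
     y1 = l*x1 + nu \<and> y2 = l*x2 + nu \<and>
     (x1 \<noteq> x2 \<or> l * tangent_den E x1 y1 = tangent_num E x1 y1 \<and> tangent_den E x1 y1 \<noteq> 0))"

lemma padd_addition_line:
  assumes "addition_line E l nu (x1, y1) (x2, y2)"
  shows "padd E (Some (x1, y1)) (Some (x2, y2))
    = pneg E (Some (third_x E l x1 x2, l * third_x E l x1 x2 + nu))"
proof -
  have y1: "y1 = l*x1 + nu" and y2: "y2 = l*x2 + nu"
    using assms by (simp_all add: addition_line_def)
  have slope: "(if x1 = x2 then tangent_num E x1 y1 / tangent_den E x1 y1
      else (y2 - y1) / (x2 - x1)) = l"
    using assms by (auto simp: addition_line_def field_simps)
  have not_vertical: "\<not> (x1 = x2 \<and> y1 + y2 + of_int (wa1 E)*x2 + of_int (wa3 E) = 0)"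
    using assms by (auto simp: addition_line_def tangent_den_def)
  have "padd E (Some (x1, y1)) (Some (x2, y2)) = Some (third_x E l x1 x2,
      - (l + of_int (wa1 E)) * third_x E l x1 x2 - (y1 - l*x1) - of_int (wa3 E))"
    unfolding padd_def Let_def tangent_num_def[symmetric] tangent_den_def[symmetric]
    using not_vertical by (simp add: slope third_x_def)
  then show ?thesis
    by (simp add: y1 algebra_simps)
qed

lemma addition_line_cases:
  assumes "weq E x1 y1 = 0" and "weq E x2 y2 = 0"
  obtains "x2 = x1" and "y1 + y2 + of_int (wa1 E)*x1 + of_int (wa3 E) = 0"
  | l nu where "addition_line E l nu (x1, y1) (x2, y2)"
proof (cases "x1 = x2")
  case False
  define l where "l = (y2 - y1) / (x2 - x1)"
  have "l*(x2 - x1) = y2 - y1"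
    using False by (simp add: l_def)
  then have "addition_line E l (y1 - l*x1) (x1, y1) (x2, y2)"
    using False by (simp add: addition_line_def algebra_simps)
  then show ?thesis by (rule that(2))
next
  case True
  have "(y2 - y1) * (y1 + y2 + of_int (wa1 E)*x1 + of_int (wa3 E)) = 0"
    using assms unfolding True weq_def by algebra
  then consider "y1 + y2 + of_int (wa1 E)*x1 + of_int (wa3 E) = 0"
    | "y2 = y1" "tangent_den E x1 y1 \<noteq> 0"
    by (force simp: tangent_den_def)
  then show ?thesis
  proof cases
    case 1
    then show ?thesis using True that(1) by simp
  next
    case 2
    define l where "l = tangent_num E x1 y1 / tangent_den E x1 y1"
    have "addition_line E l (y1 - l*x1) (x1, y1) (x2, y2)"
      using True 2 by (simp add: addition_line_def l_def)
    then show ?thesis by (rule that(2))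
  qed
qed

lemma third_point_on_curve:
  assumes line: "addition_line E l nu (x1, y1) (x2, y2)"
    and "weq E x1 y1 = 0" and "weq E x2 y2 = 0"
  shows "weq E (third_x E l x1 x2) (l * third_x E l x1 x2 + nu) = 0"
proof -
  have y1: "y1 = l*x1 + nu" and y2: "y2 = l*x2 + nu"
    using line by (simp_all add: addition_line_def)
  have on1: "weq E x1 (l*x1 + nu) = 0" and on2: "weq E x2 (l*x2 + nu) = 0"
    using assms(2,3) y1 y2 by simp_all
  show ?thesis
  proof (cases "x1 = x2")
    case True
    then have "l * tangent_den E x1 (l*x1 + nu) = tangent_num E x1 (l*x1 + nu)"
      using line y1 by (simp add: addition_line_def)
    from tangent_third_root[OF on1 this, of "third_x E l x1 x2"] show ?thesis
      using True by (simp add: third_x_def)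
  next
    case False
    from chord_third_root(1)[OF False on1 on2, of "third_x E l x1 x2"] show ?thesis
      by (simp add: third_x_def)
  qed
qed

lemma on_curve_padd:
  assumes "on_curve E P" and "on_curve E Q"
  shows "on_curve E (padd E P Q)"
proof (cases "P = None \<or> Q = None")
  case True
  then show ?thesis using assms by auto
next
  case False
  then obtain x1 y1 x2 y2 where P: "P = Some (x1, y1)" and Q: "Q = Some (x2, y2)"
    by auto
  have on1: "weq E x1 y1 = 0" and on2: "weq E x2 y2 = 0"
    using assms P Q by (simp_all add: on_curve_Some)
  from on1 on2 show ?thesis
  proof (cases rule: addition_line_cases)
    case 1
    then show ?thesis using P Q padd_vertical by (simp add: on_curve_def)
  next
    case (2 l nu)
    then have "on_curve E (Some (third_x E l x1 x2, l * third_x E l x1 x2 + nu))"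
      using on1 on2 third_point_on_curve by (simp add: on_curve_Some)
    from on_curve_pneg[OF this] show ?thesis
      using P Q padd_addition_line[OF 2] by simp
  qed
qed

lemma on_curve_pmult: "on_curve E P \<Longrightarrow> on_curve E (pmult E n P)"
  by (induction n) (simp_all add: on_curve_def[of E None] on_curve_padd)

lemma addition_line_to_third_point:
  assumes "elliptic E" and line: "addition_line E l nu (x1, y1) (x2, y2)"
    and on1: "weq E x1 y1 = 0" and on2: "weq E x2 y2 = 0"
  shows "addition_line E l nu (x1, y1) (third_x E l x1 x2, l * third_x E l x1 x2 + nu)"
proof (cases "x1 = third_x E l x1 x2")
  case x13: True
  have y1: "y1 = l*x1 + nu" and y2: "y2 = l*x2 + nu"
    using line by (simp_all add: addition_line_def)
  have tangent: "l * tangent_den E x1 y1 = tangent_num E x1 y1"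
  proof (cases "x1 = x2")
    case True
    then show ?thesis using line by (auto simp: addition_line_def)
  next
    case False
    from chord_third_root(2)[OF False, of E l nu "third_x E l x1 x2"]
    show ?thesis
      using on1 on2 x13 y1 y2 by (simp add: third_x_def)
  qed
  have "tangent_den E x1 y1 \<noteq> 0"
    using tangent disc_eq_0_if_singular[OF on1] \<open>elliptic E\<close> by (auto simp: elliptic_def)
  then show ?thesis
    using y1 tangent x13 by (simp add: addition_line_def)
next
  case False
  then show ?thesis
    using line by (simp add: addition_line_def)
qed

lemma third_x_third_x [simp]: "third_x E l x1 (third_x E l x1 x2) = x2"
  by (simp add: third_x_def)

text \<open>A special case of associativity: P, S and -(P + S) lie on one addition line.\<close>
lemma padd_pneg_padd:
  assumes "elliptic E" and "on_curve E P" and "on_curve E S"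
  shows "padd E P (pneg E (padd E P S)) = pneg E S"
proof (cases "P = None \<or> S = None")
  case True
  then show ?thesis by (auto simp: padd_pneg)
next
  case False
  then obtain x1 y1 x2 y2 where P: "P = Some (x1, y1)" and S: "S = Some (x2, y2)"
    by auto
  have on1: "weq E x1 y1 = 0" and on2: "weq E x2 y2 = 0"
    using assms P S by (simp_all add: on_curve_Some)
  from on1 on2 show ?thesis
  proof (cases rule: addition_line_cases)
    case 1
    then show ?thesis
      using P S padd_vertical by (simp add: algebra_simps)
  next
    case (2 l nu)
    have y2: "y2 = l*x2 + nu"
      using 2 by (simp add: addition_line_def)
    show ?thesis
      using P S y2 padd_addition_line[OF 2]
        padd_addition_line[OF addition_line_to_third_point[OF \<open>elliptic E\<close> 2 on1 on2]]
      by simp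
  qed
qed

lemma pmult_2: "pmult E 2 P = padd E P P"
  by (simp add: numeral_2_eq_2)

lemma pmult_2_pmult_neq_None:
  assumes "elliptic E" and "on_curve E P" and "infinite_order E P" and "n \<ge> 1"
  shows "pmult E 2 (pmult E n P) \<noteq> None"
proof
  assume "pmult E 2 (pmult E n P) = None"
  then have "padd E (pmult E n P) (pmult E n P) = None"
    by (simp add: pmult_2)
  moreover obtain x y where Q: "pmult E n P = Some (x, y)"
    using assms(3,4) by (auto simp: infinite_order_def)
  ultimately have self_neg: "pneg E (pmult E n P) = pmult E n P"
    by (simp add: padd_def Let_def algebra_simps split: if_splits)
  have "pmult E (n + k) P = pneg E (pmult E (n - k) P)" if "k \<le> n" for k
    using that
  proof (induction k)
    case 0
    then show ?case using self_neg by simp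
  next
    case (Suc k)
    then have "n - k = Suc (n - Suc k)" by simp
    then have "pmult E (n + Suc k) P = padd E P (pneg E (padd E P (pmult E (n - Suc k) P)))"
      using Suc by simp
    also have "\<dots> = pneg E (pmult E (n - Suc k) P)"
      using assms(1,2) by (simp add: padd_pneg_padd on_curve_pmult)
    finally show ?case .
  qed
  from this[of n] have "pmult E (n + n) P = None"
    by simp
  moreover have "pmult E (n + n) P \<noteq> None"
    using assms(3,4) by (simp add: infinite_order_def)
  ultimately show False by simp
qed

lemma denominators_square_cube:
  fixes r s t w a1 a3 C :: int
  assumes "s > 0" and "w > 0" and "coprime t w" and "coprime s C"
    and eq: "t^2*s^3 + a1*r*t*s^2*w + a3*t*s^3*w = w^2 * C"
  shows "\<exists>m. m > 0 \<and> s = m^2 \<and> w = m^3"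
proof -
  have "s^2 dvd w^2 * C"
    unfolding eq[symmetric] by (intro dvd_add) (simp_all add: power2_eq_square power3_eq_cube)
  then have "s dvd w"
    using \<open>coprime s C\<close> by (simp add: coprime_dvd_mult_left_iff)
  then obtain m where w: "w = s*m" by blast
  have "m > 0"
    using assms(1,2) w by (simp add: zero_less_mult_iff)
  define K where "K = t^2 + a1*r*t*m + a3*t*s*m"
  have "s^2 * (s*K) = s^2 * (m^2 * C)"
    using eq unfolding w K_def by (simp add: algebra_simps power2_eq_square power3_eq_cube)
  then have sK: "s*K = m^2*C"
    using assms(1) by simp
  have cmt: "coprime m t"
    using \<open>coprime t w\<close> w by (simp add: coprime_commute)
  have "m dvd s*K - m*(s*(a1*r*t + a3*t*s))"
    unfolding sK by (intro dvd_diff) (simp_all add: power2_eq_square)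
  moreover have "s*K - m*(s*(a1*r*t + a3*t*s)) = s*t^2"
    by (simp add: K_def algebra_simps)
  ultimately have "m dvd s"
    using cmt by (simp add: coprime_dvd_mult_left_iff)
  then obtain k where s: "s = m*k" by blast
  have "k > 0"
    using assms(1) \<open>m > 0\<close> s by (simp add: zero_less_mult_iff)
  have kK: "k*K = m*C"
    using sK \<open>m > 0\<close> unfolding s by (simp add: power2_eq_square)
  have "m dvd k*K - m*(k*(a1*r*t + a3*t*s))"
    unfolding kK by (intro dvd_diff) simp_all
  moreover have "k*K - m*(k*(a1*r*t + a3*t*s)) = k*t^2"
    by (simp add: K_def algebra_simps)
  ultimately have "m dvd k"
    using cmt by (simp add: coprime_dvd_mult_left_iff)
  moreover have "k dvd m"
  proof -
    have "coprime k C"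
      using \<open>coprime s C\<close> s by simp
    moreover have "k dvd m*C"
      unfolding kK[symmetric] by simp
    ultimately show ?thesis
      by (simp add: coprime_dvd_mult_left_iff)
  qed
  ultimately have "k = m"
    using \<open>k > 0\<close> \<open>m > 0\<close> by (simp add: zdvd_antisym_nonneg)
  then show ?thesis
    using \<open>m > 0\<close> s w by (auto simp: power2_eq_square power3_eq_cube)
qed

lemma on_curve_lowest_terms:
  assumes "weq E x y = 0"
  obtains a b d :: int where "d > 0" and "coprime a d" and "coprime b d"
    and "x = of_int a / of_int d^2" and "y = of_int b / of_int d^3"
proof -
  obtain r s where "quotient_of x = (r, s)" by (cases "quotient_of x")
  then have "s > 0" and "coprime r s" and x: "x = of_int r / of_int s"
    using quotient_of_denom_pos quotient_of_coprime quotient_of_div by blast+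
  obtain t w where "quotient_of y = (t, w)" by (cases "quotient_of y")
  then have "w > 0" and "coprime t w" and y: "y = of_int t / of_int w"
    using quotient_of_denom_pos quotient_of_coprime quotient_of_div by blast+
  define C where "C = r^3 + s*(wa2 E*r^2 + wa4 E*r*s + wa6 E*s^2)"
  have "coprime s C"
    using \<open>coprime r s\<close> unfolding C_def
    by (metis coprime_commute coprime_iff_gcd_eq_1 coprime_power_right_iff gcd_add_mult
        add.commute mult.commute)
  moreover have "t^2*s^3 + wa1 E*r*t*s^2*w + wa3 E*t*s^3*w = w^2 * C"
  proof -
    have "(of_int (t^2*s^3 + wa1 E*r*t*s^2*w + wa3 E*t*s^3*w - w^2 * C) :: rat)
        = (of_int s)^3 * (of_int w)^2 * weq E x y"
      using \<open>s > 0\<close> \<open>w > 0\<close> unfolding x y C_def weq_def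
      by (simp add: field_simps power2_eq_square power3_eq_cube)
    then show ?thesis
      using assms by (simp only: mult_zero_right of_int_eq_0_iff right_minus_eq)
  qed
  ultimately obtain m where "m > 0" "s = m^2" "w = m^3"
    using denominators_square_cube \<open>s > 0\<close> \<open>w > 0\<close> \<open>coprime t w\<close> by blast
  then show ?thesis
    using that[of m r t] \<open>coprime r s\<close> \<open>coprime t w\<close> x y by simp
qed

lemma square_denominator_unique:
  fixes a d a' d' :: int
  assumes "d > 0" and "d' > 0" and "coprime a d" and "coprime a' d'"
    and "(of_int a / of_int d^2 :: rat) = of_int a' / of_int d'^2"
  shows "d = d'"
proof -
  have "(of_int (a*d'^2) :: rat) = of_int (a'*d^2)"
    using assms by (simp add: field_simps)
  then have eq: "a*d'^2 = a'*d^2"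
    by (simp only: of_int_eq_iff)
  have "d^2 dvd d'^2"
    using eq assms(3) by (metis coprime_commute coprime_dvd_mult_right_iff coprime_power_right_iff
        dvd_triv_right power2_eq_square)
  moreover have "d'^2 dvd d^2"
    using eq assms(4) by (metis coprime_commute coprime_dvd_mult_right_iff coprime_power_right_iff
        dvd_triv_right power2_eq_square)
  ultimately show ?thesis
    using assms(1,2) by (simp add: zdvd_antisym_nonneg)
qed

lemma dnum_Some:
  assumes "d > 0" and "coprime a d" and "coprime b d"
  shows "dnum (Some (of_int a / of_int d^2, of_int b / of_int d^3)) = d"
  unfolding dnum_def
proof (rule the_equality)
  show "\<exists>a' b'. d > 0 \<and> gcd a' d = 1 \<and> gcd b' d = 1 \<and> Some (of_int a / of_int d^2, of_int b / of_int d^3)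
      = Some (of_int a' / of_int d^2, of_int b' / of_int d^3)"
    using assms by (intro exI[of _ a] exI[of _ b]) (simp add: coprime_iff_gcd_eq_1)
next
  fix d'
  assume "\<exists>a' b'. d' > 0 \<and> gcd a' d' = 1 \<and> gcd b' d' = 1 \<and>
    Some (of_int a / of_int d^2, of_int b / of_int d^3)
      = Some (of_int a' / (of_int d'^2 :: rat), of_int b' / of_int d'^3)"
  then obtain a' where "d' > 0" "coprime a' d'" "(of_int a / of_int d^2 :: rat) = of_int a' / of_int d'^2"
    by (auto simp: coprime_iff_gcd_eq_1)
  then show "d' = d"
    using square_denominator_unique[of d' d a' a] assms by simp
qed

lemma quotient_of_int_fraction:
  fixes m n :: int
  assumes "n \<noteq> 0"
  obtains m' n' where "quotient_of (of_int m / of_int n) = (m', n')"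
    and "n' > 0" and "coprime m' n'" and "m * n' = m' * n"
proof -
  obtain m' n' where q: "quotient_of (of_int m / of_int n) = (m', n')"
    by (cases "quotient_of (of_int m / of_int n :: rat)")
  then have "n' > 0" and "coprime m' n'" and "(of_int m / of_int n :: rat) = of_int m' / of_int n'"
    using quotient_of_denom_pos quotient_of_coprime quotient_of_div by blast+
  then have "(of_int (m * n') :: rat) = of_int (m' * n)"
    using assms by (simp add: field_simps)
  then have "m * n' = m' * n"
    by (simp only: of_int_eq_iff)
  then show ?thesis
    using that q \<open>n' > 0\<close> \<open>coprime m' n'\<close> by blast
qed

lemma prime_not_dvd_both_if_coprime:
  fixes p :: int
  assumes "prime p" and "coprime a b" and "p dvd a"
  shows "\<not> p dvd b"
  using assms by (meson coprime_common_divisor not_prime_unit)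

lemma in_pmax_int_fraction:
  fixes p m n :: int
  assumes p: "prime p" and "n \<noteq> 0" and "\<not> p dvd n"
  shows "in_pmax p (of_int m / of_int n) \<longleftrightarrow> p dvd m"
proof -
  obtain m' n' where q: "quotient_of (of_int m / of_int n) = (m', n')"
    and "n' > 0" and "coprime m' n'" and eq: "m * n' = m' * n"
    using quotient_of_int_fraction \<open>n \<noteq> 0\<close> by blast
  have "n' dvd m' * n"
    unfolding eq[symmetric] by simp
  then have "n' dvd n"
    using \<open>coprime m' n'\<close> by (simp add: coprime_dvd_mult_right_iff coprime_commute)
  then have "\<not> p dvd n'"
    using \<open>\<not> p dvd n\<close> by (meson dvd_trans)
  moreover have "p dvd m' \<longleftrightarrow> p dvd m"
    using arg_cong[OF eq, of "(dvd) p"] \<open>\<not> p dvd n\<close> \<open>\<not> p dvd n'\<close> p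
    by (simp add: prime_dvd_mult_iff)
  ultimately show ?thesis
    using q by (simp add: in_pmax_def)
qed

lemma padic_unit_int_fraction:
  fixes p m n :: int
  assumes p: "prime p" and "m \<noteq> 0" and "n \<noteq> 0"
  shows "padic_unit p (of_int m / of_int n) \<longleftrightarrow> multiplicity p m = multiplicity p n"
proof -
  obtain m' n' where q: "quotient_of (of_int m / of_int n) = (m', n')"
    and "n' > 0" and "coprime m' n'" and eq: "m * n' = m' * n"
    using quotient_of_int_fraction \<open>n \<noteq> 0\<close> by blast
  have "m' \<noteq> 0"
    using eq assms(2) \<open>n' > 0\<close> by auto
  have pe: "prime_elem p"
    using p by (rule prime_imp_prime_elem)
  have val: "multiplicity p m + multiplicity p n' = multiplicity p m' + multiplicity p n"
    using arg_cong[OF eq, of "multiplicity p"] assms(2,3) \<open>m' \<noteq> 0\<close> \<open>n' > 0\<close>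
    by (simp add: prime_elem_multiplicity_mult_distrib[OF pe])
  have "\<not> (p dvd m' \<and> p dvd n')"
    using prime_not_dvd_both_if_coprime[OF p \<open>coprime m' n'\<close>] by blast
  then have one_zero: "multiplicity p m' = 0 \<or> multiplicity p n' = 0"
    using \<open>m' \<noteq> 0\<close> \<open>n' > 0\<close> by (auto simp: prime_elem_multiplicity_eq_zero_iff[OF pe])
  have "padic_unit p (of_int m / of_int n) \<longleftrightarrow> multiplicity p m' = 0 \<and> multiplicity p n' = 0"
    using q \<open>m' \<noteq> 0\<close> \<open>n' > 0\<close>
    by (simp add: padic_unit_def prime_elem_multiplicity_eq_zero_iff[OF pe])
  also have "\<dots> \<longleftrightarrow> multiplicity p m = multiplicity p n"
    using val one_zero by auto
  finally show ?thesis .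
qed

lemma padic_unit_all_primes_iff:
  fixes v :: rat
  shows "(\<forall>q::int. prime q \<longrightarrow> padic_unit q v) \<longleftrightarrow> \<bar>v\<bar> = 1"
proof
  obtain m n where q: "quotient_of v = (m, n)"
    by (cases "quotient_of v")
  then have "n > 0" and v: "v = of_int m / of_int n"
    using quotient_of_denom_pos quotient_of_div by blast+
  assume "\<forall>q::int. prime q \<longrightarrow> padic_unit q v"
  then have no_prime_factor: "\<not> q dvd m \<and> \<not> q dvd n" if "prime q" for q
    using that q by (simp add: padic_unit_def)
  have unit: "is_unit k" if "k \<noteq> 0" and "\<And>q. prime q \<Longrightarrow> \<not> q dvd k" for k :: int
    using that prime_divisor_exists by metis
  have "m \<noteq> 0"
    using no_prime_factor[of 2] by auto
  have "is_unit m" and "is_unit n"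
    using \<open>m \<noteq> 0\<close> \<open>n > 0\<close> no_prime_factor by (intro unit; simp)+
  then have "n = 1" and "\<bar>m\<bar> = 1"
    using \<open>n > 0\<close> by auto
  then show "\<bar>v\<bar> = 1"
    using v by (simp flip: of_int_abs)
next
  assume "\<bar>v\<bar> = 1"
  then have "v = 1 \<or> v = -1"
    by auto
  then show "\<forall>q::int. prime q \<longrightarrow> padic_unit q v"
    by (auto simp: padic_unit_def prime_int_iff)
qed

text \<open>e^2 is the denominator of M / X^2 in lowest terms.\<close>
lemma multiplicity_le_if_square_eq:
  fixes p M e a X :: int
  assumes p: "prime p" and eq: "M * e^2 = a * X^2" and "coprime a e" and "X \<noteq> 0"
  shows "multiplicity p e \<le> multiplicity p X"
    and "\<not> p dvd M \<Longrightarrow> multiplicity p e = multiplicity p X"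
proof -
  have pe: "prime_elem p"
    using p by (rule prime_imp_prime_elem)
  have val: "multiplicity p M + 2 * multiplicity p e = multiplicity p a + 2 * multiplicity p X"
    if "M \<noteq> 0" "e \<noteq> 0" "a \<noteq> 0"
    using arg_cong[OF eq, of "multiplicity p"] that \<open>X \<noteq> 0\<close>
    by (simp add: prime_elem_multiplicity_mult_distrib[OF pe]
        prime_elem_multiplicity_power_distrib[OF pe])
  show "multiplicity p e \<le> multiplicity p X"
  proof (cases "p dvd e \<and> e \<noteq> 0")
    case True
    then have "\<not> p dvd a"
      using prime_not_dvd_both_if_coprime[OF p, of e a] \<open>coprime a e\<close> by (auto simp: coprime_commute)
    then have "a \<noteq> 0" and "multiplicity p a = 0"
      by (auto simp: not_dvd_imp_multiplicity_0)
    moreover have "M \<noteq> 0"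
      using eq \<open>a \<noteq> 0\<close> \<open>X \<noteq> 0\<close> by auto
    ultimately show ?thesis
      using val True by simp
  next
    case False
    then show ?thesis
      by (auto simp: not_dvd_imp_multiplicity_0)
  qed
  show "multiplicity p e = multiplicity p X" if "\<not> p dvd M"
  proof (cases "p dvd e")
    case True
    then have "\<not> p dvd a"
      using prime_not_dvd_both_if_coprime[OF p, of e a] \<open>coprime a e\<close> by (auto simp: coprime_commute)
    moreover have "a \<noteq> 0" and "e \<noteq> 0" and "M \<noteq> 0"
      using that \<open>\<not> p dvd a\<close> eq \<open>X \<noteq> 0\<close> by auto
    ultimately show ?thesis
      using val that by (simp add: not_dvd_imp_multiplicity_0)
  next
    case False
    then have "e \<noteq> 0" and "M \<noteq> 0"
      using that by auto
    then have "a \<noteq> 0"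
      using eq by auto
    then show ?thesis
      using val \<open>e \<noteq> 0\<close> \<open>M \<noteq> 0\<close> that False by (simp add: not_dvd_imp_multiplicity_0)
  qed
qed

text \<open>The Weierstrass equation, tangent_den (= f_2) and tangent_num at (a/d^2, b/d^3)
  times d^6, d^3 and d^4; double_x_num is the numerator of x(2R) over (d tangent_den_int)^2.\<close>

definition weq_int :: "wcurve \<Rightarrow> int \<Rightarrow> int \<Rightarrow> int \<Rightarrow> int" where
  "weq_int E a b d = b^2 + wa1 E*a*b*d + wa3 E*b*d^3
     - (a^3 + wa2 E*a^2*d^2 + wa4 E*a*d^4 + wa6 E*d^6)"

definition tangent_den_int :: "wcurve \<Rightarrow> int \<Rightarrow> int \<Rightarrow> int \<Rightarrow> int" where
  "tangent_den_int E a b d = 2*b + wa1 E*a*d + wa3 E*d^3"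

definition tangent_num_int :: "wcurve \<Rightarrow> int \<Rightarrow> int \<Rightarrow> int \<Rightarrow> int" where
  "tangent_num_int E a b d = 3*a^2 + 2*wa2 E*a*d^2 + wa4 E*d^4 - wa1 E*b*d"

definition double_x_num :: "wcurve \<Rightarrow> int \<Rightarrow> int \<Rightarrow> int \<Rightarrow> int" where
  "double_x_num E a b d = (let D = tangent_den_int E a b d; N = tangent_num_int E a b d in
     N^2 + wa1 E*N*d*D - wa2 E*d^2*D^2 - 2*a*D^2)"

lemma weq_lowest_terms:
  assumes "d \<noteq> 0"
  shows "weq E (of_int a / of_int d^2) (of_int b / of_int d^3) = of_int (weq_int E a b d) / of_int d^6"
  using assms by (simp add: weq_def weq_int_def field_simps eval_nat_numeral)

lemma tangent_den_lowest_terms: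
  assumes "d \<noteq> 0"
  shows "tangent_den E (of_int a / of_int d^2) (of_int b / of_int d^3)
    = of_int (tangent_den_int E a b d) / of_int d^3"
  using assms by (simp add: tangent_den_def tangent_den_int_def field_simps eval_nat_numeral)

lemma tangent_num_lowest_terms:
  assumes "d \<noteq> 0"
  shows "tangent_num E (of_int a / of_int d^2) (of_int b / of_int d^3)
    = of_int (tangent_num_int E a b d) / of_int d^4"
  using assms by (simp add: tangent_num_def tangent_num_int_def field_simps eval_nat_numeral)

lemma third_x_tangent_lowest_terms:
  assumes "d \<noteq> 0" and "tangent_den_int E a b d \<noteq> 0"
    and l: "l = tangent_num E x y / tangent_den E x y"
    and x: "x = of_int a / of_int d^2" and y: "y = of_int b / of_int d^3"
  shows "third_x E l x x
    = of_int (double_x_num E a b d) / (of_int d * of_int (tangent_den_int E a b d))^2"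
proof -
  have slope: "l = of_int (tangent_num_int E a b d) / (of_int d * of_int (tangent_den_int E a b d))"
    unfolding l x y tangent_den_lowest_terms[OF assms(1)] tangent_num_lowest_terms[OF assms(1)]
    using assms(1,2) by (simp add: field_simps eval_nat_numeral)
  show ?thesis
    unfolding third_x_def slope x double_x_num_def Let_def
    using assms(1,2) by (simp add: field_simps eval_nat_numeral)
qed

lemma double_x_num_cong:
  assumes "weq_int E a b d = 0"
  shows "[double_x_num E a b d = a^4] (mod d)"
proof -
  define D where "D = tangent_den_int E a b d"
  define N where "N = tangent_num_int E a b d"
  have D: "[D = 2*b] (mod d)"
    unfolding cong_iff_dvd_diff D_def tangent_den_int_def
    by (rule dvdI[of _ _ "wa1 E*a + wa3 E*d^2"]) (simp add: algebra_simps eval_nat_numeral)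
  have N: "[N = 3*a^2] (mod d)"
    unfolding cong_iff_dvd_diff N_def tangent_num_int_def
    by (rule dvdI[of _ _ "2*wa2 E*a*d + wa4 E*d^3 - wa1 E*b"]) (simp add: algebra_simps eval_nat_numeral)
  have curve: "[b^2 = a^3] (mod d)"
    using assms unfolding cong_iff_dvd_diff weq_int_def
    by (intro dvdI[of _ _ "wa2 E*a^2*d + wa4 E*a*d^3 + wa6 E*d^5 - wa1 E*a*b - wa3 E*b*d^2"])
      (simp add: algebra_simps eval_nat_numeral)
  have "[double_x_num E a b d = N^2 - 2*a*D^2] (mod d)"
    unfolding cong_iff_dvd_diff double_x_num_def Let_def D_def[symmetric] N_def[symmetric]
    by (rule dvdI[of _ _ "wa1 E*N*D - wa2 E*d*D^2"]) (simp add: algebra_simps eval_nat_numeral)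
  also have "[N^2 - 2*a*D^2 = (3*a^2)^2 - 2*a*(2*b)^2] (mod d)"
    using D N by (intro cong_diff cong_mult cong_pow cong_refl)
  also have "(3*a^2)^2 - 2*a*(2*b)^2 = 9*a^4 - 8*a*b^2"
    by (simp add: algebra_simps eval_nat_numeral)
  also have "[9*a^4 - 8*a*b^2 = 9*a^4 - 8*a*a^3] (mod d)"
    using curve by (intro cong_diff cong_mult cong_refl)
  also have "9*a^4 - 8*a*a^3 = a^4"
    by (simp add: algebra_simps eval_nat_numeral)
  finally show ?thesis .
qed

lemma multiplicity_denominator_double_less:
  fixes p a b d a' e :: int
  assumes p: "prime p" and "d * tangent_den_int E a b d \<noteq> 0"
    and eq: "double_x_num E a b d * e^2 = a' * (d * tangent_den_int E a b d)^2"
    and "coprime a' e"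
    and "p dvd tangent_den_int E a b d" and "p dvd tangent_num_int E a b d"
  shows "multiplicity p e < multiplicity p (d * tangent_den_int E a b d)"
proof -
  obtain D' N' where D': "tangent_den_int E a b d = p * D'" and N': "tangent_num_int E a b d = p * N'"
    using assms(5,6) by (auto elim!: dvdE)
  define M' where "M' = N'^2 + wa1 E*N'*d*D' - wa2 E*d^2*D'^2 - 2*a*D'^2"
  have "p^2 * (M' * e^2) = p^2 * (a' * (d * D')^2)"
    using eq unfolding double_x_num_def Let_def M'_def D' N'
    by (simp add: algebra_simps power2_eq_square)
  then have "M' * e^2 = a' * (d * D')^2"
    using p by (simp add: prime_gt_0_int)
  moreover have "d * D' \<noteq> 0"
    using assms(2) D' by simp
  ultimately have "multiplicity p e \<le> multiplicity p (d * D')"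
    using multiplicity_le_if_square_eq(1)[OF p _ \<open>coprime a' e\<close>] by blast
  moreover have "multiplicity p (d * tangent_den_int E a b d) = Suc (multiplicity p (d * D'))"
    unfolding D' mult.left_commute[of d p]
    using prime_gt_1_int[OF p] \<open>d * D' \<noteq> 0\<close> multiplicity_times_same[of "d * D'" p] by simp
  ultimately show ?thesis
    by simp
qed

lemma multiplicity_denominator_double:
  fixes p a b d a' e :: int
  assumes p: "prime p" and "coprime a d" and curve: "weq_int E a b d = 0"
    and "tangent_den_int E a b d \<noteq> 0" and "d \<noteq> 0"
    and eq: "double_x_num E a b d * e^2 = a' * (d * tangent_den_int E a b d)^2"
    and "coprime a' e"
  shows "multiplicity p e = multiplicity p (d * tangent_den_int E a b d) \<longleftrightarrow>
    p dvd d \<or> \<not> (p dvd tangent_den_int E a b d \<and> p dvd tangent_num_int E a b d)"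
proof -
  define D where "D = tangent_den_int E a b d"
  define N where "N = tangent_num_int E a b d"
  have M: "double_x_num E a b d = N^2 + wa1 E*N*d*D - wa2 E*d^2*D^2 - 2*a*D^2"
    by (simp add: double_x_num_def Let_def D_def N_def)
  have "d * D \<noteq> 0"
    using assms(4,5) D_def by simp
  note le = multiplicity_le_if_square_eq(1)[OF p eq[folded D_def] \<open>coprime a' e\<close> \<open>d * D \<noteq> 0\<close>]
  note equal = multiplicity_le_if_square_eq(2)[OF p eq[folded D_def] \<open>coprime a' e\<close> \<open>d * D \<noteq> 0\<close>]
  consider "p dvd d" | "\<not> p dvd d" "\<not> p dvd D" | "p dvd D" "\<not> p dvd N" | "\<not> p dvd d" "p dvd D" "p dvd N"
    by blast
  then show ?thesis
  proof cases
    case 1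
    then have "\<not> p dvd a^4"
      using prime_not_dvd_both_if_coprime[OF p, of d a] \<open>coprime a d\<close> p
      by (simp add: coprime_commute prime_dvd_power_iff)
    moreover have "[double_x_num E a b d = a^4] (mod p)"
      using double_x_num_cong[OF curve] 1 by (rule cong_dvd_modulus)
    ultimately show ?thesis
      using 1 equal by (simp add: cong_dvd_iff D_def)
  next
    case 2
    then have "multiplicity p (d * D) = 0"
      using p by (simp add: not_dvd_imp_multiplicity_0 prime_dvd_mult_iff)
    then show ?thesis
      using 2 le by (simp add: D_def)
  next
    case 3
    have "double_x_num E a b d = N^2 + D * (wa1 E*N*d - wa2 E*d^2*D - 2*a*D)"
      unfolding M by (simp add: algebra_simps power2_eq_square)
    moreover have "\<not> p dvd N^2"
      using 3 p by (simp add: prime_dvd_power_iff)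
    ultimately have "\<not> p dvd double_x_num E a b d"
      using 3 by (simp add: dvd_add_left_iff)
    then show ?thesis
      using 3 equal by (simp add: D_def N_def)
  next
    case 4
    then show ?thesis
      using multiplicity_denominator_double_less[OF p _ eq \<open>coprime a' e\<close>] \<open>d * D \<noteq> 0\<close>
      by (simp add: D_def N_def)
  qed
qed

lemma nonsing_red_lowest_terms:
  fixes p :: int
  assumes p: "prime p" and "d > 0" and "coprime a d" and "coprime b d"
  shows "nonsing_red E p (Some (of_int a / of_int d^2, of_int b / of_int d^3)) \<longleftrightarrow>
    p dvd d \<or> \<not> (p dvd tangent_den_int E a b d \<and> p dvd tangent_num_int E a b d)"
proof -
  define x y where "x = (of_int a / of_int d^2 :: rat)" and "y = (of_int b / of_int d^3 :: rat)"
  have "d \<noteq> 0"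
    using \<open>d > 0\<close> by simp
  have "in_pmax p (tangent_den E x y) \<longleftrightarrow> p dvd tangent_den_int E a b d"
    if "\<not> p dvd d"
    unfolding x_def y_def tangent_den_lowest_terms[OF \<open>d \<noteq> 0\<close>]
    using p that \<open>d > 0\<close> in_pmax_int_fraction[OF p, of "d^3" "tangent_den_int E a b d"]
    by (simp add: prime_dvd_power_iff)
  moreover have "in_pmax p (- tangent_num E x y) \<longleftrightarrow> p dvd tangent_num_int E a b d"
    if "\<not> p dvd d"
    unfolding x_def y_def tangent_num_lowest_terms[OF \<open>d \<noteq> 0\<close>]
    using p that \<open>d > 0\<close> in_pmax_int_fraction[OF p, of "d^4" "- tangent_num_int E a b d"]
    by (simp add: prime_dvd_power_iff)
  moreover have "dnum (Some (x, y)) = d"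
    unfolding x_def y_def using assms(2-4) by (rule dnum_Some)
  ultimately show ?thesis
    by (auto simp: nonsing_red_def tangent_den_def tangent_num_def x_def[symmetric] y_def[symmetric]
        algebra_simps)
qed

lemma pmult_2_lowest_terms:
  assumes "on_curve E Q" and Q: "Q = Some (x, y)" and "pmult E 2 Q \<noteq> None"
    and "d \<noteq> 0" and x: "x = of_int a / of_int d^2" and y: "y = of_int b / of_int d^3"
  obtains a' e where "e > 0" and "coprime a' e" and "dnum (pmult E 2 Q) = e"
    and "tangent_den_int E a b d \<noteq> 0"
    and "double_x_num E a b d * e^2 = a' * (d * tangent_den_int E a b d)^2"
proof -
  have "tangent_den E x y \<noteq> 0"
    using assms(3) Q padd_vertical[of x x y y E] by (auto simp: pmult_2 tangent_den_def)
  then have D: "tangent_den_int E a b d \<noteq> 0"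
    using tangent_den_lowest_terms[OF \<open>d \<noteq> 0\<close>] x y by auto
  define l where "l = tangent_num E x y / tangent_den E x y"
  have "addition_line E l (y - l*x) (x, y) (x, y)"
    using \<open>tangent_den E x y \<noteq> 0\<close> by (simp add: addition_line_def l_def)
  then obtain Y where Q2: "pmult E 2 Q = Some (third_x E l x x, Y)"
    by (simp add: pmult_2 Q padd_addition_line)
  then have "weq E (third_x E l x x) Y = 0"
    using on_curve_pmult[OF assms(1), of 2] by (simp add: on_curve_Some)
  then obtain a' e b' where "e > 0" and "coprime a' e" and "coprime b' e"
    and X: "third_x E l x x = of_int a' / of_int e^2" and "Y = of_int b' / of_int e^3"
    by (rule on_curve_lowest_terms)
  then have "dnum (pmult E 2 Q) = e"
    using Q2 dnum_Some by simp
  moreover have "double_x_num E a b d * e^2 = a' * (d * tangent_den_int E a b d)^2"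
  proof -
    have "(of_int (double_x_num E a b d) / (of_int d * of_int (tangent_den_int E a b d))^2 :: rat)
        = of_int a' / of_int e^2"
      using third_x_tangent_lowest_terms[OF \<open>d \<noteq> 0\<close> D l_def x y] X by simp
    then have "(of_int (double_x_num E a b d * e^2) :: rat) = of_int (a' * (d * tangent_den_int E a b d)^2)"
      using D \<open>d \<noteq> 0\<close> \<open>e > 0\<close> by (simp add: field_simps)
    then show ?thesis
      by (simp only: of_int_eq_iff)
  qed
  ultimately show ?thesis
    using that \<open>e > 0\<close> \<open>coprime a' e\<close> D by blast
qed

lemma nonsing_red_iff_padic_unit_u2:
  fixes p :: int
  assumes p: "prime p" and "on_curve E Q" and "Q \<noteq> None" and "pmult E 2 Q \<noteq> None"
  shows "nonsing_red E p Q \<longleftrightarrow> padic_unit p (u2 E Q)"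
proof -
  obtain x y where Q: "Q = Some (x, y)"
    using assms(3) by auto
  then have "weq E x y = 0"
    using assms(2) by (simp add: on_curve_Some)
  then obtain a b d where "d > 0" and "coprime a d" and "coprime b d"
    and x: "x = of_int a / of_int d^2" and y: "y = of_int b / of_int d^3"
    by (rule on_curve_lowest_terms)
  then have "d \<noteq> 0"
    by simp
  have curve: "weq_int E a b d = 0"
    using \<open>weq E x y = 0\<close> weq_lowest_terms[OF \<open>d \<noteq> 0\<close>] \<open>d \<noteq> 0\<close> x y by simp
  obtain a' e where "e > 0" and "coprime a' e" and d2Q: "dnum (pmult E 2 Q) = e"
    and D: "tangent_den_int E a b d \<noteq> 0"
    and eq: "double_x_num E a b d * e^2 = a' * (d * tangent_den_int E a b d)^2"
    using pmult_2_lowest_terms[OF assms(2) Q assms(4) \<open>d \<noteq> 0\<close> x y] by blast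
  have dQ: "dnum Q = d"
    unfolding Q x y using \<open>d > 0\<close> \<open>coprime a d\<close> \<open>coprime b d\<close> by (rule dnum_Some)
  have "u2 E Q = of_int d ^ 4 * tangent_den E x y / of_int e"
    unfolding u2_def dQ d2Q unfolding Q by simp
  also have "\<dots> = of_int (d * tangent_den_int E a b d) / of_int e"
    unfolding x y tangent_den_lowest_terms[OF \<open>d \<noteq> 0\<close>]
    using \<open>d \<noteq> 0\<close> by (simp add: field_simps eval_nat_numeral)
  finally have "u2 E Q = of_int (d * tangent_den_int E a b d) / of_int e" .
  then have "padic_unit p (u2 E Q) \<longleftrightarrow> multiplicity p e = multiplicity p (d * tangent_den_int E a b d)"
    using padic_unit_int_fraction[OF p, of "d * tangent_den_int E a b d" e] D \<open>d \<noteq> 0\<close> \<open>e > 0\<close>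
    by auto
  also have "\<dots> \<longleftrightarrow> nonsing_red E p Q"
    unfolding Q x y nonsing_red_lowest_terms[OF p \<open>d > 0\<close> \<open>coprime a d\<close> \<open>coprime b d\<close>]
    using p \<open>coprime a d\<close> curve D \<open>d \<noteq> 0\<close> eq \<open>coprime a' e\<close>
    by (rule multiplicity_denominator_double)
  finally show ?thesis ..
qed

theorem proposition1p8:
  fixes E :: wcurve and p :: int and P :: qpoint
  assumes "prime p"
    and "elliptic E"
    and "on_curve E P"
    and "P \<noteq> None"
    and "infinite_order E P"
  shows "(nonsing_red E p P \<longleftrightarrow> padic_unit p (u2 E P))
         \<and> CE E P = (LEAST n. n \<ge> 1 \<and> \<bar>u2 E (pmult E n P)\<bar> = 1)"
proof
  have multiple: "on_curve E (pmult E n P) \<and> pmult E n P \<noteq> None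
      \<and> pmult E 2 (pmult E n P) \<noteq> None" if "n \<ge> 1" for n
    using assms(2,3,5) that on_curve_pmult pmult_2_pmult_neq_None by (auto simp: infinite_order_def)
  show "nonsing_red E p P \<longleftrightarrow> padic_unit p (u2 E P)"
    using nonsing_red_iff_padic_unit_u2[OF assms(1)] multiple[of 1] by simp
  have "in_E0 E (pmult E n P) \<longleftrightarrow> \<bar>u2 E (pmult E n P)\<bar> = 1" if "n \<ge> 1" for n
    unfolding in_E0_def padic_unit_all_primes_iff[symmetric]
    using nonsing_red_iff_padic_unit_u2 multiple[OF that] by blast
  then show "CE E P = (LEAST n. n \<ge> 1 \<and> \<bar>u2 E (pmult E n P)\<bar> = 1)"
    unfolding CE_def by (simp cong: conj_cong)
qed

end
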